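(* For every integer $t\ge 2$, there exists a $(12t+10,3,2)$-BIBD $(X,\mathcal{A})$ with a weak nesting $\phi:\mathcal{A}\to Y$, $X\subseteq Y$, where $|Y|=w=14t+13$.
   Context: A $(v,k,\lambda)$-BIBD is a pair $(X,\mathcal{A})$ where $X$ is a set of $v$ points and $\mathcal{A}$ is a multiset of $k$-subsets of $X$ (blocks) such that every pair of distinct points lies in exactly $\lambda$ blocks. A partial $(w,k,\lambda)$-BIBD is defined in the same way on $w$ points, except that every pair lies in at most $\lambda$ blocks. Given a $(v,k,\lambda)$-BIBD $(X,\mathcal{A})$ and a set $Y\supseteq X$ with $|Y|=w$, a map $\phi:\mathcal{A}\to Y$ is a weak nesting if $\phi(A)\notin A$ for every block $A$ and the multiset $\{A\cup\{\phi(A)\}:A\in\mathcal{A}\}$ is a partial $(w,k+1,\lambda+1)$-BIBD on $Y$. *)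

theory Defs
  imports Main
begin

text \<open>A design is given by a finite index set I of block labels and a map B
from labels to blocks; the multiset of blocks is the image multiset of B over I
(repeated blocks are allowed, via distinct labels with equal blocks).\<close>

definition pair_count :: "'i set \<Rightarrow> ('i \<Rightarrow> 'a set) \<Rightarrow> 'a \<Rightarrow> 'a \<Rightarrow> nat" where
  "pair_count I B x y = card {i \<in> I. x \<in> B i \<and> y \<in> B i}"

definition is_BIBD :: "'a set \<Rightarrow> nat \<Rightarrow> nat \<Rightarrow> nat \<Rightarrow> 'i set \<Rightarrow> ('i \<Rightarrow> 'a set) \<Rightarrow> bool" where
  "is_BIBD X v k  lam I B \<longleftrightarrow>
     finite X \<and> card X = v \<and> finite I \<and>
     (\<forall>i\<in>I. B i \<subseteq> X \<and> card (B i) = k) \<and>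
     (\<forall>x\<in>X. \<forall>y\<in>X. x \<noteq> y \<longrightarrow> pair_count I B x y = lam)"

definition is_partial_BIBD :: "'a set \<Rightarrow> nat \<Rightarrow> nat \<Rightarrow> nat \<Rightarrow> 'i set \<Rightarrow> ('i \<Rightarrow> 'a set) \<Rightarrow> bool" where
  "is_partial_BIBD Y w k  lam I B \<longleftrightarrow>
     finite Y \<and> card Y = w \<and> finite I \<and>
     (\<forall>i\<in>I. B i \<subseteq> Y \<and> card (B i) = k) \<and>
     (\<forall>x\<in>Y. \<forall>y\<in>Y. x \<noteq> y \<longrightarrow> pair_count I B x y \<le> lam)"

definition is_weak_nesting :: "'a set \<Rightarrow> nat \<Rightarrow> 'i set \<Rightarrow> ('i \<Rightarrow> 'a set) \<Rightarrow> nat \<Rightarrow> nat \<Rightarrow> ('i \<Rightarrow> 'a) \<Rightarrow> bool" where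
  "is_weak_nesting Y w I B k lam \<phi> \<longleftrightarrow>
     (\<forall>i\<in>I. \<phi> i \<in> Y \<and> \<phi> i \<notin> B i) \<and>
     is_partial_BIBD Y w (k + 1) (lam + 1) I (\<lambda>i. insert (\<phi> i) (B i))"

end

theory Submission
  imports Defs "HOL-Library.Countable"
begin

(* Let m = 4t + 3 and X = Z_m \<times> Z_3 \<union> {\<infinity>}. The blocks are the translates under x \<mapsto> x + 1 of
   {\<infinity>, (0, j), (0, j + 1)}, {(0, 0), (0, 1), (0, 2)} and {(0, j), (2h, j), (h, j + 1)} for 0 < h < m;
   as 2 is invertible modulo m, every pair of points lies in exactly two of them.
   The block {(x, j), (x + 2h, j), (x + h, j + 1)} is nested at (x + g h, j + 1) for the 2t - 1
   differences h of a set H, and at a new point \<infinity>_h for the 2t + 3 other h; the other blocks are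
   nested at (x + t, j + 2) and (x + t + 2, 0). The pairs of X that the nesting adds are pairwise
   distinct because the differences they realise, namely \<plusminus>t, \<plusminus>(t + 2), g h and g h - 2h between
   consecutive levels and \<plusminus>(t + 2), \<plusminus>(g h - h) within a level (h \<in> H), are pairwise distinct
   modulo m. So every pair lies in at most three augmented blocks. *)

section \<open>Relabelling designs\<close>

lemma pair_count_commute: "pair_count I B x y = pair_count I B y x"
  unfolding pair_count_def by (metis conj_commute)

lemma pair_count_doubleton: "{x, y} = {x', y'} \<Longrightarrow> pair_count I B x y = pair_count I B x' y'"
  by (auto simp: doubleton_eq_iff pair_count_commute)

lemma pair_count_relabel:
  assumes "inj f" "inj g"
  shows "pair_count (g ` I) (\<lambda>j. f ` B (inv g j)) (f x) (f y) = pair_count I B x y"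
proof -
  have "{j \<in> g ` I. f x \<in> f ` B (inv g j) \<and> f y \<in> f ` B (inv g j)} = g ` {i \<in> I. x \<in> B i \<and> y \<in> B i}"
    using assms by (auto simp: inj_image_mem_iff)
  then show ?thesis
    unfolding pair_count_def using card_image[OF inj_on_subset[OF assms(2)]] by simp
qed

lemma is_partial_BIBD_relabel:
  assumes "inj f" "inj g" "is_partial_BIBD Y w k l I B"
  shows "is_partial_BIBD (f ` Y) w k l (g ` I) (\<lambda>j. f ` B (inv g j))"
  using assms card_image[OF inj_on_subset[OF assms(1)]]
  by (auto simp: is_partial_BIBD_def pair_count_relabel image_mono)

lemma is_BIBD_relabel:
  assumes "inj f" "inj g" "is_BIBD X v k l I B"
  shows "is_BIBD (f ` X) v k l (g ` I) (\<lambda>j. f ` B (inv g j))"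
  using assms card_image[OF inj_on_subset[OF assms(1)]]
  by (auto simp: is_BIBD_def pair_count_relabel image_mono)

lemma is_weak_nesting_relabel:
  assumes "inj f" "inj g" "is_weak_nesting Y w I B k l \<phi>"
  shows "is_weak_nesting (f ` Y) w (g ` I) (\<lambda>j. f ` B (inv g j)) k l (\<lambda>j. f (\<phi> (inv g j)))"
proof -
  have "is_partial_BIBD (f ` Y) w (k + 1) (l + 1) (g ` I) (\<lambda>j. f ` insert (\<phi> (inv g j)) (B (inv g j)))"
    using assms by (intro is_partial_BIBD_relabel) (auto simp: is_weak_nesting_def)
  then show ?thesis
    using assms by (auto simp: is_weak_nesting_def inj_image_mem_iff)
qed

lemma weak_nesting_on_nat:
  fixes X Y :: "'a::countable set" and I :: "'i::countable set"
  assumes "is_BIBD X v k l I B" "X \<subseteq> Y" "finite Y" "is_weak_nesting Y (card Y) I B k l \<phi>"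
  shows "\<exists>(X' :: nat set) (Y' :: nat set) (I' :: nat set) (B' :: nat \<Rightarrow> nat set) (\<phi>' :: nat \<Rightarrow> nat).
           is_BIBD X' v k l I' B' \<and> X' \<subseteq> Y' \<and> finite Y' \<and> card Y' = card Y \<and>
           is_weak_nesting Y' (card Y) I' B' k l \<phi>'"
proof (intro exI conjI)
  show "is_BIBD (to_nat ` X) v k l (to_nat ` I) (\<lambda>j. to_nat ` B (inv to_nat j))"
    using inj_to_nat inj_to_nat assms(1) by (rule is_BIBD_relabel)
  show "is_weak_nesting (to_nat ` Y) (card Y) (to_nat ` I) (\<lambda>j. to_nat ` B (inv to_nat j)) k l
      (\<lambda>j. to_nat (\<phi> (inv to_nat j)))"
    using inj_to_nat inj_to_nat assms(4) by (rule is_weak_nesting_relabel)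
  show "to_nat ` X \<subseteq> to_nat ` Y"
    using assms(2) by (rule image_mono)
  show "finite (to_nat ` Y)"
    using assms(3) by simp
  show "card (to_nat ` Y) = card Y"
    using inj_on_subset[OF inj_to_nat subset_UNIV] by (rule card_image)
qed

section \<open>Residues modulo m and modulo 3\<close>

lemma mod_add_eq_imp_diff_mod: "a mod n = (b + c) mod n \<Longrightarrow> (a - c) mod n = (b::int) mod n"
  by (metis add_diff_cancel_right' mod_diff_left_eq)

lemma add_mod_eq_self_iff: "(x + d) mod m = x mod m \<longleftrightarrow> d mod m = (0::int)"
  by (simp add: mod_eq_dvd_iff dvd_eq_mod_eq_0)

lemma mod_eq_solve:
  fixes x c a n :: int
  assumes "0 \<le> x" "x < n"
  shows "(x + c) mod n = a mod n \<longleftrightarrow> x = (a - c) mod n"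
proof
  assume "(x + c) mod n = a mod n"
  then have "(a - c) mod n = x mod n"
    by (metis mod_add_eq_imp_diff_mod)
  with assms show "x = (a - c) mod n" by simp
next
  assume "x = (a - c) mod n"
  then show "(x + c) mod n = a mod n"
    by (simp add: mod_simps)
qed

lemma mod_eq_window:
  fixes m u v :: int
  assumes "u mod m = v mod m" "\<bar>u - v\<bar> < 2 * m"
  shows "u = v \<or> u = v + m \<or> v = u + m"
proof -
  obtain q where q: "u - v = m * q"
    using assms(1) mod_eq_dvd_iff[of u m v] by (auto elim: dvdE)
  have "m > 0" using assms(2) by linarith
  with q assms(2) have "\<bar>q\<bar> < 2"
    by (metis abs_mult abs_of_pos mult_less_cancel_left_pos mult.commute)
  then have "q = 0 \<or> q = 1 \<or> q = -1" by linarith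
  with q show ?thesis by auto
qed

lemma mod_3_cases: "(k::int) mod 3 = 0 \<or> k mod 3 = 1 \<or> k mod 3 = 2"
  by presburger

lemma mod_3_shift_neq [simp]:
  "(j + 1) mod 3 \<noteq> (j::int) mod 3" "(j::int) mod 3 \<noteq> (j + 1) mod 3"
  "(j + 1) mod 3 \<noteq> (j::int)" "(j::int) \<noteq> (j + 1) mod 3"
  "(j + 2) mod 3 \<noteq> (j::int) mod 3" "(j::int) mod 3 \<noteq> (j + 2) mod 3"
  "(j + 2) mod 3 \<noteq> (j::int)" "(j::int) \<noteq> (j + 2) mod 3"
  "(j + 2) mod 3 \<noteq> (j + 1) mod 3" "(j + 1) mod 3 \<noteq> (j + 2) mod 3"
  "(j - 1) mod 3 \<noteq> (j::int) mod 3" "(j::int) mod 3 \<noteq> (j - 1) mod 3"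
  by presburger+

lemma level_trichotomy: "(l::int) mod 3 = k mod 3 \<or> l mod 3 = (k + 1) mod 3 \<or> k mod 3 = (l + 1) mod 3"
proof -
  have "(k + 1) mod 3 = (k mod 3 + 1) mod 3" "(l + 1) mod 3 = (l mod 3 + 1) mod 3"
    by (simp_all add: mod_add_left_eq)
  with mod_3_cases[of k] mod_3_cases[of l] show ?thesis
    by (elim disjE; simp)
qed

lemma consecutive_levels:
  fixes k j :: int
  assumes "k mod 3 = j mod 3 \<or> k mod 3 = (j + 1) mod 3"
    and "(k + 1) mod 3 = j mod 3 \<or> (k + 1) mod 3 = (j + 1) mod 3"
  shows "k mod 3 = j mod 3 \<and> (k + 1) mod 3 = (j + 1) mod 3"
proof -
  have "(k + 1) mod 3 = (k mod 3 + 1) mod 3" "(j + 1) mod 3 = (j mod 3 + 1) mod 3"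
    by (simp_all add: mod_add_left_eq)
  with assms mod_3_cases[of k] mod_3_cases[of j] show ?thesis
    by (elim disjE) simp_all
qed

section \<open>The cyclic (12t + 10, 3, 2)-BIBD\<close>

(* Pt x j is the point (x, j) of Z_m \<times> Z_3, with representatives 0 \<le> x < m and 0 \<le> j < 3
   chosen by pt below; Aux h is the new point \<infinity>_h of Y. *)
datatype point = Infty | Pt int int | Aux int
datatype label = Tri int int | Col int | Dev int int int

instance point :: countable by countable_datatype
instance label :: countable by countable_datatype

(* A pair {nest i, z} with z \<in> block i joins two points on consecutive levels or on one level.
   Up to translation it is described by a cross_kind resp. a level_kind d; its difference (upper
   minus lower point, resp. nest i minus z) is cross_diff d resp. level_diff d, and i is recovered
   from d and the lower point, resp. z, by cross_label resp. level_label. *)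
datatype cross_kind = Tri_up | Tri_down | Col_up | Col_down | Dev_first int | Dev_second int
datatype level_kind = Col_level | Dev_level int

locale cyclic_nesting =
  fixes t :: int
  assumes t_ge: "2 \<le> t"
begin

abbreviation m :: int where "m \<equiv> 4 * t + 3"

definition pt :: "int \<Rightarrow> int \<Rightarrow> point" where
  "pt x j = Pt (x mod m) (j mod 3)"

lemma pt_eq_iff: "pt x j = pt y k \<longleftrightarrow> x mod m = y mod m \<and> j mod 3 = k mod 3"
  by (simp add: pt_def)

lemma pt_distinct [simp]: "pt x j \<noteq> Infty" "Infty \<noteq> pt x j" "pt x j \<noteq> Aux h" "Aux h \<noteq> pt x j"
  by (simp_all add: pt_def)

lemma pt_mod_simps [simp]:
  "pt (x mod m) j = pt x j" "pt x (j mod 3) = pt x j"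
  "pt (x mod m + d) j = pt (x + d) j" "pt (x + d mod m) j = pt (x + d) j"
  "pt x (j mod 3 + e) = pt x (j + e)"
  by (simp_all add: pt_def mod_simps)

lemma pt_neq_succ_level [simp]: "pt x j \<noteq> pt y (j + 1)" "pt y (j + 1) \<noteq> pt x j"
  by (simp_all add: pt_eq_iff)

lemma pt_pair_diff: "pt u l = pt a k \<Longrightarrow> pt v l' = pt b k' \<Longrightarrow> (b - a) mod m = (v - u) mod m"
  unfolding pt_eq_iff by (metis mod_diff_cong)

lemma pt_level_clash: "pt u l = pt a k \<Longrightarrow> pt v l' = pt b k \<Longrightarrow> l mod 3 \<noteq> l' mod 3 \<Longrightarrow> False"
  by (simp add: pt_eq_iff)

lemma pt_level_clash_succ: "pt u l = pt a k \<Longrightarrow> pt v l = pt b (k + 1) \<Longrightarrow> False"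
  by (simp add: pt_eq_iff)

definition points :: "point set" where
  "points = insert Infty ((\<lambda>(x, j). Pt x j) ` ({0..<m} \<times> {0..<3}))"

lemma finite_points: "finite points"
  by (simp add: points_def)

lemma Infty_in_points [simp]: "Infty \<in> points"
  by (simp add: points_def)

lemma pt_in_points [simp]: "pt x j \<in> points"
  using t_ge by (auto simp: points_def pt_def)

lemma Aux_notin_points [simp]: "Aux h \<notin> points"
  by (auto simp: points_def)

lemma points_cases:
  assumes "p \<in> points"
  obtains "p = Infty" | x j where "p = pt x j"
  using assms unfolding points_def pt_def
  by auto (metis mod_pos_pos_trivial)

lemma points_pair_cases:
  assumes "p \<in> points" "q \<in> points" "p \<noteq> q"
  obtains (Infty) a k where "{p, q} = {Infty, pt a k}"
    | (level) a b k where "{p, q} = {pt a k, pt b k}" "a mod m \<noteq> b mod m"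
    | (succ) a b k where "{p, q} = {pt a k, pt b (k + 1)}"
proof -
  have thesis if p: "p = pt a k" and q: "q = pt b l" for a k b l
    using level_trichotomy[of l k]
  proof (elim disjE)
    assume "l mod 3 = k mod 3"
    then have "pt b l = pt b k"
      by (simp add: pt_eq_iff)
    with assms(3) p q show thesis
      using level[of a k b] by (simp add: pt_eq_iff)
  next
    assume "l mod 3 = (k + 1) mod 3"
    then have "pt b l = pt b (k + 1)"
      by (simp add: pt_eq_iff)
    with p q show thesis
      using succ[of a k b] by simp
  next
    assume "k mod 3 = (l + 1) mod 3"
    then have "pt a k = pt a (l + 1)"
      by (simp add: pt_eq_iff)
    with p q show thesis
      using succ[of b l a] by (simp add: insert_commute)
  qed
  with assms Infty show thesis
    by (elim points_cases) (auto simp: insert_commute)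
qed

lemma card_points: "int (card points) = 12 * t + 10"
proof -
  have "card ((\<lambda>(x, j). Pt x j) ` ({0..<m} \<times> {0..<3})) = card ({0..<m} \<times> {0..<3::int})"
    by (rule card_image) (auto simp: inj_on_def)
  also have "\<dots> = nat m * 3"
    by (simp add: card_cartesian_product)
  moreover have "Infty \<notin> (\<lambda>(x, j). Pt x j) ` ({0..<m} \<times> {0..<3})"
    by auto
  ultimately show ?thesis
    using t_ge by (simp add: points_def)
qed

lemma inverse_2_mod_m: "((2 * t + 2) * (2 * d)) mod m = d mod m"
proof -
  have "(2 * t + 2) * (2 * d) = d + d * m" by (simp add: algebra_simps)
  then show ?thesis by simp
qed

lemma double_mod_m_eq_0: "(2 * d) mod m = 0 \<Longrightarrow> d mod m = 0"
  by (metis inverse_2_mod_m mod_mult_right_eq mult_zero_right)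

lemma mod_m_diff_nonzero: "a mod m \<noteq> b mod m \<Longrightarrow> (b - a) mod m \<noteq> 0"
  by (simp add: mod_eq_dvd_iff dvd_eq_mod_eq_0[symmetric] dvd_diff_commute)

lemma mod_m_nonzero_ge_1:
  assumes "d mod m \<noteq> 0"
  shows "1 \<le> d mod m"
proof -
  have "0 \<le> d mod m"
    using t_ge by simp
  with assms show ?thesis by linarith
qed

lemma diff_mod_m_neq_neg:
  assumes "a mod m \<noteq> b mod m"
  shows "(b - a) mod m \<noteq> (a - b) mod m"
proof
  assume "(b - a) mod m = (a - b) mod m"
  then have "(2 * (b - a)) mod m = 0"
    by (metis add.right_inverse minus_diff_eq mod_add_cong mod_0 mult_2)
  then have "(b - a) mod m = 0"
    by (rule double_mod_m_eq_0)
  with mod_m_diff_nonzero[OF assms] show False ..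
qed

definition half :: "int \<Rightarrow> int" where
  "half d = ((2 * t + 2) * d) mod m"

lemma double_half: "(2 * half d) mod m = d mod m"
  by (metis half_def inverse_2_mod_m mod_mult_right_eq mult.left_commute)

lemma half_range:
  assumes "d mod m \<noteq> 0"
  shows "1 \<le> half d \<and> half d < m"
proof -
  have "half d \<noteq> 0"
    using assms double_half[of d] by auto
  moreover have "0 \<le> half d" "half d < m"
    using t_ge by (simp_all add: half_def)
  ultimately show ?thesis by linarith
qed

lemma pt_add_double_half [simp]: "pt (a + 2 * half (b - a)) k = pt b k"
  by (metis add_diff_cancel_left' diff_add_cancel double_half mod_add_right_eq pt_eq_iff)

lemma half_unique:
  assumes "0 \<le> h" "h < m" "(a + 2 * h) mod m = b mod m"
  shows "h = half (b - a)"
proof -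
  have "(2 * h) mod m = (b - a) mod m"
    using assms(3) by (metis add_diff_cancel_left' mod_diff_cong mod_mod_trivial)
  then have "((2 * t + 2) * (2 * h)) mod m = ((2 * t + 2) * (b - a)) mod m"
    by (metis mod_mult_right_eq)
  with assms(1,2) show ?thesis by (simp add: inverse_2_mod_m half_def)
qed

definition labels :: "label set" where
  "labels = (\<lambda>(x, j). Tri x j) ` ({0..<m} \<times> {0..<3}) \<union> Col ` {0..<m}
     \<union> (\<lambda>(x, h, j). Dev x h j) ` ({0..<m} \<times> {1..<m} \<times> {0..<3})"

lemma label_in_labels_iff [simp]:
  "Tri x j \<in> labels \<longleftrightarrow> 0 \<le> x \<and> x < m \<and> 0 \<le> j \<and> j < 3"
  "Col x \<in> labels \<longleftrightarrow> 0 \<le> x \<and> x < m"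
  "Dev x h j \<in> labels \<longleftrightarrow> 0 \<le> x \<and> x < m \<and> 1 \<le> h \<and> h < m \<and> 0 \<le> j \<and> j < 3"
  by (auto simp: labels_def) (auto intro!: image_eqI[where x = "(x, h, j)"])

lemma finite_labels: "finite labels"
  by (simp add: labels_def)

fun block :: "label \<Rightarrow> point set" where
  "block (Tri x j) = {Infty, pt x j, pt x (j + 1)}"
| "block (Col x) = {pt x 0, pt x 1, pt x 2}"
| "block (Dev x h j) = {pt x j, pt (x + 2 * h) j, pt (x + h) (j + 1)}"

lemma block_subset_points: "block i \<subseteq> points"
  by (cases i) simp_all

lemma pt_in_block_iff:
  "pt a k \<in> block (Tri x j) \<longleftrightarrow> a mod m = x mod m \<and> (k mod 3 = j mod 3 \<or> k mod 3 = (j + 1) mod 3)"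
  "pt a k \<in> block (Col x) \<longleftrightarrow> a mod m = x mod m"
  "pt a k \<in> block (Dev x h j) \<longleftrightarrow>
     k mod 3 = j mod 3 \<and> (a mod m = x mod m \<or> a mod m = (x + 2 * h) mod m)
     \<or> k mod 3 = (j + 1) mod 3 \<and> a mod m = (x + h) mod m"
  using mod_3_cases[of k] by (auto simp: pt_eq_iff)

lemma card_block: "i \<in> labels \<Longrightarrow> card (block i) = 3"
proof (cases i)
  case (Dev x h j)
  moreover assume "i \<in> labels"
  ultimately have "(2 * h) mod m \<noteq> 0"
    using double_mod_m_eq_0[of h] by auto
  then have "pt x j \<noteq> pt (x + 2 * h) j"
    by (simp add: pt_eq_iff add_mod_eq_self_iff eq_commute[of "x mod m"])
  with Dev show ?thesis by simp
qed (simp_all add: pt_eq_iff)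

lemma blocks_through_Infty:
  "{i \<in> labels. Infty \<in> block i \<and> pt a k \<in> block i} = {Tri (a mod m) (k mod 3), Tri (a mod m) ((k - 1) mod 3)}"
proof (intro equalityI subsetI)
  fix i assume "i \<in> {i \<in> labels. Infty \<in> block i \<and> pt a k \<in> block i}"
  then obtain x j where i: "i = Tri x j" "0 \<le> x" "x < m" "0 \<le> j" "j < 3"
    and "pt a k \<in> {pt x j, pt x (j + 1)}"
    by (cases i) auto
  then have "a mod m = x" and lev: "k mod 3 = j \<or> k mod 3 = (j + 1) mod 3"
    by (auto simp: pt_eq_iff)
  moreover have "j = k mod 3 \<or> j = (k - 1) mod 3"
    using lev mod_add_eq_imp_diff_mod[of k 3 j 1] i(4,5) by auto
  ultimately show "i \<in> {Tri (a mod m) (k mod 3), Tri (a mod m) ((k - 1) mod 3)}"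
    using i(1) by auto
next
  fix i assume "i \<in> {Tri (a mod m) (k mod 3), Tri (a mod m) ((k - 1) mod 3)}"
  then show "i \<in> {i \<in> labels. Infty \<in> block i \<and> pt a k \<in> block i}"
    using t_ge by auto
qed

lemma blocks_through_vertical:
  "{i \<in> labels. pt a k \<in> block i \<and> pt a (k + 1) \<in> block i} = {Tri (a mod m) (k mod 3), Col (a mod m)}"
proof (intro equalityI subsetI)
  fix i assume "i \<in> {i \<in> labels. pt a k \<in> block i \<and> pt a (k + 1) \<in> block i}"
  then have i: "i \<in> labels" and mem: "pt a k \<in> block i" "pt a (k + 1) \<in> block i"
    by simp_all
  show "i \<in> {Tri (a mod m) (k mod 3), Col (a mod m)}"
  proof (cases i)
    case (Tri x j)
    with mem have "a mod m = x mod m"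
      and "k mod 3 = j mod 3 \<or> k mod 3 = (j + 1) mod 3"
      and "(k + 1) mod 3 = j mod 3 \<or> (k + 1) mod 3 = (j + 1) mod 3"
      by (simp_all add: pt_in_block_iff del: block.simps)
    then have "k mod 3 = j mod 3"
      using consecutive_levels[of k j] by blast
    with i Tri \<open>a mod m = x mod m\<close> show ?thesis
      by simp
  next
    case (Col x)
    with i mem show ?thesis
      by (simp add: pt_in_block_iff del: block.simps)
  next
    case (Dev x h j)
    from mem[unfolded Dev pt_in_block_iff]
    have lev: "k mod 3 = j mod 3" "(k + 1) mod 3 = (j + 1) mod 3"
      using consecutive_levels[of k j] by blast+
    with mem[unfolded Dev pt_in_block_iff]
    have "a mod m = (x + h) mod m" "a mod m = x mod m \<or> a mod m = (x + 2 * h) mod m"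
      by auto
    then have "(x + h) mod m = x mod m \<or> (x + h + h) mod m = (x + h) mod m"
      by (metis add.assoc mult_2)
    then have "h mod m = 0"
      using add_mod_eq_self_iff[of x h m] add_mod_eq_self_iff[of "x + h" h m] by blast
    with i Dev show ?thesis by simp
  qed
next
  fix i assume "i \<in> {Tri (a mod m) (k mod 3), Col (a mod m)}"
  then show "i \<in> {i \<in> labels. pt a k \<in> block i \<and> pt a (k + 1) \<in> block i}"
    using t_ge by (auto simp: pt_in_block_iff mod_add_left_eq simp del: block.simps)
qed

lemma blocks_through_diagonal:
  assumes ab: "a mod m \<noteq> b mod m"
  shows "{i \<in> labels. pt a k \<in> block i \<and> pt b (k + 1) \<in> block i} =
    {Dev (a mod m) ((b - a) mod m) (k mod 3), Dev ((2 * b - a) mod m) ((a - b) mod m) (k mod 3)}"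
proof (intro equalityI subsetI)
  fix i assume "i \<in> {i \<in> labels. pt a k \<in> block i \<and> pt b (k + 1) \<in> block i}"
  then have i: "i \<in> labels" and mem: "pt a k \<in> block i" "pt b (k + 1) \<in> block i"
    by simp_all
  show "i \<in> {Dev (a mod m) ((b - a) mod m) (k mod 3), Dev ((2 * b - a) mod m) ((a - b) mod m) (k mod 3)}"
  proof (cases i)
    case (Dev x h j)
    from mem[unfolded Dev pt_in_block_iff]
    have lev: "k mod 3 = j mod 3" "(k + 1) mod 3 = (j + 1) mod 3"
      using consecutive_levels[of k j] by blast+
    with mem[unfolded Dev pt_in_block_iff]
    have b: "b mod m = (x + h) mod m" and a_cases: "a mod m = x mod m \<or> a mod m = (x + 2 * h) mod m"
      by auto
    from a_cases show ?thesis
    proof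
      assume a: "a mod m = x mod m"
      then have "(b - a) mod m = (x + h - x) mod m"
        using b by (intro mod_diff_cong)
      with a i Dev lev show ?thesis by simp
    next
      assume a: "a mod m = (x + 2 * h) mod m"
      then have "(a - b) mod m = (x + 2 * h - (x + h)) mod m"
        using b by (intro mod_diff_cong)
      moreover have "(2 * b - a) mod m = (2 * (x + h) - (x + 2 * h)) mod m"
        using a b by (intro mod_diff_cong mod_mult_cong refl)
      ultimately show ?thesis using i Dev lev by simp
    qed
  qed (use i mem ab in \<open>simp_all add: pt_in_block_iff del: block.simps\<close>)
next
  fix i assume "i \<in> {Dev (a mod m) ((b - a) mod m) (k mod 3), Dev ((2 * b - a) mod m) ((a - b) mod m) (k mod 3)}"
  moreover have "1 \<le> (b - a) mod m" "1 \<le> (a - b) mod m"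
    using ab mod_m_diff_nonzero[of a b] mod_m_diff_nonzero[of b a]
    by (simp_all add: mod_m_nonzero_ge_1)
  moreover have "((2 * b - a) mod m + 2 * ((a - b) mod m)) mod m = (2 * b - a + 2 * (a - b)) mod m"
    by (intro mod_add_cong mod_mult_cong; simp)
  ultimately show "i \<in> {i \<in> labels. pt a k \<in> block i \<and> pt b (k + 1) \<in> block i}"
    using t_ge by (auto simp: pt_in_block_iff mod_simps simp del: block.simps)
qed

lemma blocks_through_horizontal:
  assumes ab: "a mod m \<noteq> b mod m"
  shows "{i \<in> labels. pt a k \<in> block i \<and> pt b k \<in> block i} =
    {Dev (a mod m) (half (b - a)) (k mod 3), Dev (b mod m) (half (a - b)) (k mod 3)}"
proof (intro equalityI subsetI)
  fix i assume "i \<in> {i \<in> labels. pt a k \<in> block i \<and> pt b k \<in> block i}"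
  then have i: "i \<in> labels" and mem: "pt a k \<in> block i" "pt b k \<in> block i"
    by simp_all
  show "i \<in> {Dev (a mod m) (half (b - a)) (k mod 3), Dev (b mod m) (half (a - b)) (k mod 3)}"
  proof (cases i)
    case (Dev x h j)
    with i have range: "0 \<le> x" "x < m" "0 \<le> h" "h < m" "0 \<le> j" "j < 3"
      by auto
    from mem[unfolded Dev pt_in_block_iff] ab have lev: "k mod 3 = j mod 3"
      by metis
    with mem[unfolded Dev pt_in_block_iff]
    have "a mod m = x mod m \<or> a mod m = (x + 2 * h) mod m" "b mod m = x mod m \<or> b mod m = (x + 2 * h) mod m"
      by simp_all
    with ab consider
        "a mod m = x mod m" "(x + 2 * h) mod m = b mod m"
      | "b mod m = x mod m" "(x + 2 * h) mod m = a mod m"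
      by metis
    then show ?thesis
    proof cases
      case 1
      then have "h = half (b - a)"
        using range by (intro half_unique) (simp_all add: mod_add_left_eq[symmetric, of a])
      with 1 Dev lev range show ?thesis by simp
    next
      case 2
      then have "h = half (a - b)"
        using range by (intro half_unique) (simp_all add: mod_add_left_eq[symmetric, of b])
      with 2 Dev lev range show ?thesis by simp
    qed
  qed (use i mem ab in \<open>simp_all add: pt_in_block_iff del: block.simps\<close>)
next
  fix i assume "i \<in> {Dev (a mod m) (half (b - a)) (k mod 3), Dev (b mod m) (half (a - b)) (k mod 3)}"
  moreover have "1 \<le> half (b - a) \<and> half (b - a) < m" "1 \<le> half (a - b) \<and> half (a - b) < m"
    using ab mod_m_diff_nonzero[of a b] mod_m_diff_nonzero[of b a] by (simp_all add: half_range)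
  ultimately show "i \<in> {i \<in> labels. pt a k \<in> block i \<and> pt b k \<in> block i}"
    using t_ge by auto
qed

lemma pair_count_Infty_pt: "pair_count labels block Infty (pt a k) = 2"
  unfolding pair_count_def blocks_through_Infty by simp

lemma pair_count_pt_succ_level: "pair_count labels block (pt a k) (pt b (k + 1)) = 2"
proof (cases "a mod m = b mod m")
  case True
  then have "pt b (k + 1) = pt a (k + 1)"
    by (simp add: pt_eq_iff)
  then show ?thesis
    unfolding pair_count_def by (simp add: blocks_through_vertical)
next
  case False
  then show ?thesis
    unfolding pair_count_def by (simp add: blocks_through_diagonal diff_mod_m_neq_neg)
qed

lemma pair_count_same_level:
  assumes "a mod m \<noteq> b mod m"
  shows "pair_count labels block (pt a k) (pt b k) = 2"
  unfolding pair_count_def using assms by (simp add: blocks_through_horizontal)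

lemma pair_count_points:
  assumes "p \<in> points" "q \<in> points" "p \<noteq> q"
  shows "pair_count labels block p q = 2"
  using assms
proof (cases rule: points_pair_cases)
  case (Infty a k)
  then show ?thesis
    by (simp add: pair_count_doubleton[OF Infty] pair_count_Infty_pt)
next
  case (level a b k)
  then show ?thesis
    by (simp add: pair_count_doubleton[OF level(1)] pair_count_same_level)
next
  case (succ a b k)
  then show ?thesis
    by (simp add: pair_count_doubleton[OF succ] pair_count_pt_succ_level)
qed

lemma design_is_BIBD: "is_BIBD points (card points) 3 2 labels block"
  unfolding is_BIBD_def
  using finite_labels card_block block_subset_points pair_count_points
  by (auto simp: points_def)

section \<open>The nesting\<close>

(* H and g of the header; g is chosen so that the differences listed there are pairwise distinct
   modulo m (cross_diff_inj, level_diff_inj). *)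
definition inner_diffs :: "int set" where
  "inner_diffs = (\<lambda>r. 3 * r - 2) ` {1..t} \<union> (\<lambda>r. 3 * r + 2) ` {1..t - 1}"

definition offset :: "int \<Rightarrow> int" where
  "offset h = (if h mod 3 = 1 then 2 * ((h + 2) div 3) + t - 1 else 4 * ((h - 2) div 3) + t + 4)"

lemma offset_simps [simp]:
  "offset (3 * r - 2) = 2 * r + t - 1"
  "offset (3 * r + 2) = 4 * r + t + 4"
proof -
  have "(3 * r - 2) mod 3 = 1" "(3 * r + 2) mod 3 = 2"
    by presburger+
  then show "offset (3 * r - 2) = 2 * r + t - 1" "offset (3 * r + 2) = 4 * r + t + 4"
    unfolding offset_def by simp_all
qed

lemma inner_diffs_cases:
  assumes "h \<in> inner_diffs"
  obtains r where "1 \<le> r" "r \<le> t" "h = 3 * r - 2" | r where "1 \<le> r" "r \<le> t - 1" "h = 3 * r + 2"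
  using assms unfolding inner_diffs_def by auto

lemma inner_diffs_subset: "inner_diffs \<subseteq> {1..<m}"
  using t_ge by (auto simp: inner_diffs_def)

lemma card_inner_diffs: "int (card inner_diffs) = 2 * t - 1"
proof -
  have disjoint: "(\<lambda>r. 3 * r - 2) ` {1..t} \<inter> (\<lambda>r. 3 * r + 2) ` {1..t - 1} = {}"
    by (auto, presburger)
  have "card inner_diffs = card ((\<lambda>r. 3 * r - 2) ` {1..t}) + card ((\<lambda>r. 3 * r + 2) ` {1..t - 1})"
    unfolding inner_diffs_def by (intro card_Un_disjoint disjoint) simp_all
  also have "\<dots> = card {1..t} + card {1..t - 1}"
    by (simp add: card_image inj_on_def)
  finally show ?thesis
    using t_ge by simp
qed

fun nest :: "label \<Rightarrow> point" where
  "nest (Tri x j) = pt (x + t) (j + 2)"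
| "nest (Col x) = pt (x + (t + 2)) 0"
| "nest (Dev x h j) = (if h \<in> inner_diffs then pt (x + offset h) (j + 1) else Aux h)"

lemma nest_neq_Infty [simp]: "nest i \<noteq> Infty"
  by (cases i) simp_all

definition aux_diffs :: "int set" where
  "aux_diffs = {1..<m} - inner_diffs"

definition ext_points :: "point set" where
  "ext_points = points \<union> Aux ` aux_diffs"

lemma points_subset_ext_points: "points \<subseteq> ext_points"
  by (simp add: ext_points_def)

lemma block_subset_ext_points: "block i \<subseteq> ext_points"
  using block_subset_points points_subset_ext_points by blast

lemma finite_ext_points: "finite ext_points"
  by (simp add: ext_points_def aux_diffs_def finite_points)

lemma card_ext_points: "int (card ext_points) = 14 * t + 13"
proof -
  have "card aux_diffs = card {1..<m} - card inner_diffs"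
    unfolding aux_diffs_def using inner_diffs_subset by (intro card_Diff_subset) (auto intro: finite_subset)
  then have aux: "int (card aux_diffs) = 2 * t + 3"
    using card_inner_diffs card_mono[OF _ inner_diffs_subset] t_ge by (simp add: of_nat_diff)
  have "card ext_points = card points + card (Aux ` aux_diffs)"
    unfolding ext_points_def by (intro card_Un_disjoint) (auto simp: points_def aux_diffs_def)
  also have "card (Aux ` aux_diffs) = card aux_diffs"
    by (simp add: card_image inj_on_def)
  finally show ?thesis
    using card_points aux by simp
qed

lemma nest_in_ext_points: "i \<in> labels \<Longrightarrow> nest i \<in> ext_points"
  by (cases i) (auto simp: ext_points_def aux_diffs_def)

fun cross_diff :: "cross_kind \<Rightarrow> int" where
  "cross_diff Tri_up = t"
| "cross_diff Tri_down = - t"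
| "cross_diff Col_up = t + 2"
| "cross_diff Col_down = - t - 2"
| "cross_diff (Dev_first h) = offset h"
| "cross_diff (Dev_second h) = offset h - 2 * h"

definition cross_kinds :: "cross_kind set" where
  "cross_kinds = {Tri_up, Tri_down, Col_up, Col_down} \<union> Dev_first ` inner_diffs \<union> Dev_second ` inner_diffs"

lemma cross_kinds_cases:
  assumes "d \<in> cross_kinds"
  obtains "d = Tri_up" | "d = Tri_down" | "d = Col_up" | "d = Col_down"
    | r where "1 \<le> r" "r \<le> t" "d = Dev_first (3 * r - 2)"
    | r where "1 \<le> r" "r \<le> t - 1" "d = Dev_first (3 * r + 2)"
    | r where "1 \<le> r" "r \<le> t" "d = Dev_second (3 * r - 2)"
    | r where "1 \<le> r" "r \<le> t - 1" "d = Dev_second (3 * r + 2)"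
  using assms unfolding cross_kinds_def by (auto elim!: inner_diffs_cases)

lemma cross_diff_bounds: "d \<in> cross_kinds \<Longrightarrow> - 3 * t - 2 \<le> cross_diff d \<and> cross_diff d \<le> 5 * t"
  using t_ge by (elim cross_kinds_cases; simp)

lemma cross_diff_inj:
  assumes d: "d \<in> cross_kinds" and d': "d' \<in> cross_kinds"
    and eq: "cross_diff d mod m = cross_diff d' mod m"
  shows "d = d'"
proof -
  have "cross_diff d = cross_diff d' \<or> cross_diff d = cross_diff d' + m \<or> cross_diff d' = cross_diff d + m"
    using cross_diff_bounds[OF d] cross_diff_bounds[OF d'] t_ge
    by (intro mod_eq_window[OF eq]) (simp add: abs_less_iff)
  with d d' t_ge show ?thesis
    by (elim cross_kinds_cases; simp; presburger)
qed

fun cross_label :: "cross_kind \<Rightarrow> int \<Rightarrow> int \<Rightarrow> label" where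
  "cross_label Tri_up a k = Tri (a mod m) ((k - 1) mod 3)"
| "cross_label Tri_down a k = Tri ((a - t) mod m) ((k - 2) mod 3)"
| "cross_label Col_up a k = Col (a mod m)"
| "cross_label Col_down a k = Col ((a - (t + 2)) mod m)"
| "cross_label (Dev_first h) a k = Dev (a mod m) h (k mod 3)"
| "cross_label (Dev_second h) a k = Dev ((a - 2 * h) mod m) h (k mod 3)"

lemma succ_level_doubleton_eqD:
  assumes "{pt c l, pt u (l + 1)} = {pt a k, pt b (k + 1)}"
  shows "pt c l = pt a k" "pt u (l + 1) = pt b (k + 1)"
proof -
  have "\<not> (pt c l = pt b (k + 1) \<and> pt u (l + 1) = pt a k)"
  proof
    assume "pt c l = pt b (k + 1) \<and> pt u (l + 1) = pt a k"
    then have "l mod 3 = (k + 1) mod 3" "(l + 1) mod 3 = k mod 3"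
      by (simp_all add: pt_eq_iff)
    then show False by presburger
  qed
  with assms show "pt c l = pt a k" "pt u (l + 1) = pt b (k + 1)"
    by (auto simp: doubleton_eq_iff)
qed

lemma cross_witness:
  assumes "d \<in> cross_kinds" "pt u l = pt a k" "pt v (l + 1) = pt b (k + 1)"
    and "v - u = cross_diff d" "i = cross_label d a k"
  shows "\<exists>d \<in> cross_kinds. cross_diff d mod m = (b - a) mod m \<and> i = cross_label d a k"
  using assms pt_pair_diff[OF assms(2,3)] by auto

lemma nested_cross_pair_Col:
  assumes i: "Col x \<in> labels" and z: "z \<in> block (Col x)"
    and pair: "{nest (Col x), z} = {pt a k, pt b (k + 1)}"
  shows "\<exists>d \<in> cross_kinds. cross_diff d mod m = (b - a) mod m \<and> Col x = cross_label d a k"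
proof -
  from z consider "z = pt x 0" | "z = pt x (0 + 1)" | "z = pt x 2"
    by auto
  then show ?thesis
  proof cases
    case 1
    with pair show ?thesis
      by (metis doubleton_eq_iff nest.simps(2) pt_level_clash_succ)
  next
    case 2
    note lu = succ_level_doubleton_eqD[OF pair[unfolded 2 nest.simps]]
    from lu(1) i have label: "Col x = cross_label Col_down a k"
      by (simp add: pt_eq_iff mod_eq_solve)
    show ?thesis
      using cross_witness[OF _ lu, where d = Col_down] label by (simp add: cross_kinds_def)
  next
    case 3
    moreover have "pt (x + (t + 2)) (2 + 1) = pt (x + (t + 2)) 0"
      by (simp add: pt_eq_iff)
    ultimately have "{pt x 2, pt (x + (t + 2)) (2 + 1)} = {pt a k, pt b (k + 1)}"
      using pair by (simp add: insert_commute)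
    note lu = succ_level_doubleton_eqD[OF this]
    from lu(1) i have label: "Col x = cross_label Col_up a k"
      by (simp add: pt_eq_iff)
    show ?thesis
      using cross_witness[OF _ lu, where d = Col_up] label by (simp add: cross_kinds_def)
  qed
qed

lemma nested_cross_pair_Tri:
  assumes i: "Tri x j \<in> labels" and z: "z \<in> block (Tri x j)"
    and pair: "{nest (Tri x j), z} = {pt a k, pt b (k + 1)}"
  shows "\<exists>d \<in> cross_kinds. cross_diff d mod m = (b - a) mod m \<and> Tri x j = cross_label d a k"
proof -
  from z consider "z = Infty" | "z = pt x (j + 2 + 1)" | "z = pt x (j + 1)"
    by (auto simp: pt_eq_iff)
  then show ?thesis
  proof cases
    case 1
    with pair show ?thesis by (simp add: doubleton_eq_iff)
  next
    case 2
    note lu = succ_level_doubleton_eqD[OF pair[unfolded 2 nest.simps]]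
    from lu(1) i have label: "Tri x j = cross_label Tri_down a k"
      by (simp add: pt_eq_iff mod_eq_solve)
    show ?thesis
      using cross_witness[OF _ lu, where d = Tri_down] label by (simp add: cross_kinds_def)
  next
    case 3
    with pair have "{pt x (j + 1), pt (x + t) (j + 1 + 1)} = {pt a k, pt b (k + 1)}"
      by (simp add: insert_commute add.assoc)
    note lu = succ_level_doubleton_eqD[OF this]
    from lu(1) i have label: "Tri x j = cross_label Tri_up a k"
      by (simp add: pt_eq_iff mod_eq_solve)
    show ?thesis
      using cross_witness[OF _ lu, where d = Tri_up] label by (simp add: cross_kinds_def)
  qed
qed

lemma nested_cross_pair_Dev:
  assumes i: "Dev x h j \<in> labels" and z: "z \<in> block (Dev x h j)"
    and pair: "{nest (Dev x h j), z} = {pt a k, pt b (k + 1)}"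
  shows "\<exists>d \<in> cross_kinds. cross_diff d mod m = (b - a) mod m \<and> Dev x h j = cross_label d a k"
proof (cases "h \<in> inner_diffs")
  case False
  with pair show ?thesis by (simp add: doubleton_eq_iff)
next
  case h: True
  from z consider "z = pt x j" | "z = pt (x + 2 * h) j" | "z = pt (x + h) (j + 1)"
    by auto
  then show ?thesis
  proof cases
    case 1
    with pair h have "{pt x j, pt (x + offset h) (j + 1)} = {pt a k, pt b (k + 1)}"
      by (simp add: insert_commute)
    note lu = succ_level_doubleton_eqD[OF this]
    from lu(1) i have label: "Dev x h j = cross_label (Dev_first h) a k"
      by (simp add: pt_eq_iff)
    show ?thesis
      using cross_witness[OF _ lu, where d = "Dev_first h"] label h
      by (simp add: cross_kinds_def)
  next
    case 2
    with pair h have "{pt (x + 2 * h) j, pt (x + offset h) (j + 1)} = {pt a k, pt b (k + 1)}"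
      by (simp add: insert_commute)
    note lu = succ_level_doubleton_eqD[OF this]
    from lu(1) i have label: "Dev x h j = cross_label (Dev_second h) a k"
      by (simp add: pt_eq_iff mod_eq_solve)
    show ?thesis
      using cross_witness[OF _ lu, where d = "Dev_second h"] label h
      by (simp add: cross_kinds_def)
  next
    case 3
    with pair h show ?thesis
      by (metis doubleton_eq_iff nest.simps(3) pt_level_clash_succ)
  qed
qed

lemma nested_cross_pair:
  assumes "i \<in> labels" "z \<in> block i" "{nest i, z} = {pt a k, pt b (k + 1)}"
  shows "\<exists>d \<in> cross_kinds. cross_diff d mod m = (b - a) mod m \<and> i = cross_label d a k"
  using assms nested_cross_pair_Tri nested_cross_pair_Col nested_cross_pair_Dev
  by (cases i) blast+

fun level_diff :: "level_kind \<Rightarrow> int" where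
  "level_diff Col_level = t + 2"
| "level_diff (Dev_level h) = offset h - h"

fun level_label :: "level_kind \<Rightarrow> int \<Rightarrow> int \<Rightarrow> label" where
  "level_label Col_level a k = Col (a mod m)"
| "level_label (Dev_level h) a k = Dev ((a - h) mod m) h ((k - 1) mod 3)"

definition level_kinds :: "level_kind set" where
  "level_kinds = insert Col_level (Dev_level ` inner_diffs)"

lemma level_diff_range: "d \<in> level_kinds \<Longrightarrow> 1 \<le> level_diff d \<and> level_diff d \<le> 2 * t + 1"
  using t_ge by (auto simp: level_kinds_def elim!: inner_diffs_cases)

lemma level_diff_inj:
  assumes "d \<in> level_kinds" "d' \<in> level_kinds" "level_diff d mod m = level_diff d' mod m"
  shows "d = d'"
proof -
  have "level_diff d = level_diff d'"
    using assms level_diff_range[OF assms(1)] level_diff_range[OF assms(2)]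
    by (simp add: mod_pos_pos_trivial)
  with assms(1,2) t_ge show ?thesis
    by (auto simp: level_kinds_def elim!: inner_diffs_cases)
qed

lemma level_diff_sum_mod_nonzero:
  assumes "d \<in> level_kinds" "d' \<in> level_kinds"
  shows "(level_diff d + level_diff d') mod m \<noteq> 0"
  using level_diff_range[OF assms(1)] level_diff_range[OF assms(2)]
  by (simp add: mod_pos_pos_trivial)

lemma level_witness:
  assumes "d \<in> level_kinds" "pt u l = pt a k" "pt v l' = pt b k'"
    and "v - u = level_diff d" "i = level_label d a k"
  shows "\<exists>d \<in> level_kinds. level_diff d mod m = (b - a) mod m \<and> i = level_label d a k"
  using assms pt_pair_diff[OF assms(2,3)] by auto

lemma nested_level_pair:
  assumes i: "i \<in> labels" and z: "z \<in> block i" and nest: "nest i = pt b k" and za: "z = pt a k"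
  shows "\<exists>d \<in> level_kinds. level_diff d mod m = (b - a) mod m \<and> i = level_label d a k"
proof (cases i)
  case (Tri x j)
  with z za nest show ?thesis
    using pt_level_clash[of x j a k "x + t" "j + 2" b] pt_level_clash[of x "j + 1" a k "x + t" "j + 2" b]
    by auto
next
  case (Col x)
  with z za consider "pt x 0 = pt a k" | "pt x 1 = pt a k" | "pt x 2 = pt a k"
    by auto
  then show ?thesis
  proof cases
    case 1
    from 1 i Col have label: "i = level_label Col_level a k"
      by (simp add: pt_eq_iff)
    show ?thesis
      using level_witness[OF _ 1 nest[unfolded Col nest.simps], where d = Col_level] label
      by (simp add: level_kinds_def)
  qed (use nest Col in \<open>auto dest: pt_level_clash\<close>)
next
  case (Dev x h j)
  show ?thesis
  proof (cases "h \<in> inner_diffs")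
    case False
    with nest Dev show ?thesis by simp
  next
    case h: True
    with z za Dev consider "pt x j = pt a k" | "pt (x + 2 * h) j = pt a k" | "pt (x + h) (j + 1) = pt a k"
      by auto
    then show ?thesis
    proof cases
      case 3
      from 3 i Dev have label: "i = level_label (Dev_level h) a k"
        by (simp add: pt_eq_iff mod_eq_solve)
      show ?thesis
        using level_witness[OF _ 3 nest[unfolded Dev nest.simps if_P[OF h]], where d = "Dev_level h"] label h
        by (simp add: level_kinds_def)
    qed (use nest Dev h in \<open>auto dest: pt_level_clash\<close>)
  qed
qed

lemma nested_Infty_pair:
  assumes "i \<in> labels" "Infty \<in> block i" "nest i = pt a k"
  shows "i = Tri ((a - t) mod m) ((k - 2) mod 3)"
  using assms by (cases i) (auto simp: pt_eq_iff mod_eq_solve)+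

lemma nested_Infty_pair_unique:
  assumes "i \<in> labels" "z \<in> block i" "{nest i, z} = {Infty, pt a k}"
    and "i' \<in> labels" "z' \<in> block i'" "{nest i', z'} = {Infty, pt a k}"
  shows "i = i'"
  using assms nested_Infty_pair[of i a k] nested_Infty_pair[of i' a k]
  by (auto simp: doubleton_eq_iff)

lemma nested_cross_pair_unique:
  assumes "i \<in> labels" "z \<in> block i" "{nest i, z} = {pt a k, pt b (k + 1)}"
    and "i' \<in> labels" "z' \<in> block i'" "{nest i', z'} = {pt a k, pt b (k + 1)}"
  shows "i = i'"
proof -
  obtain d where d: "d \<in> cross_kinds" "cross_diff d mod m = (b - a) mod m" "i = cross_label d a k"
    using nested_cross_pair[OF assms(1-3)] by blast
  obtain d' where d': "d' \<in> cross_kinds" "cross_diff d' mod m = (b - a) mod m" "i' = cross_label d' a k"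
    using nested_cross_pair[OF assms(4-6)] by blast
  have "d = d'"
    using d d' by (intro cross_diff_inj) simp_all
  with d d' show ?thesis by simp
qed

lemma nested_level_pair_unique:
  assumes ab: "a mod m \<noteq> b mod m"
    and "i \<in> labels" "z \<in> block i" "{nest i, z} = {pt a k, pt b k}"
    and "i' \<in> labels" "z' \<in> block i'" "{nest i', z'} = {pt a k, pt b k}"
  shows "i = i'"
proof -
  have decode: "\<exists>d \<in> level_kinds. level_diff d mod m = (b - a) mod m \<and> i = level_label d a k
      \<or> level_diff d mod m = (a - b) mod m \<and> i = level_label d b k"
    if "i \<in> labels" "z \<in> block i" "{nest i, z} = {pt a k, pt b k}" for i z
    using that nested_level_pair[OF that(1,2), of b k a] nested_level_pair[OF that(1,2), of a k b]
    by (auto simp: doubleton_eq_iff)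
  obtain d where d: "d \<in> level_kinds" "level_diff d mod m = (b - a) mod m \<and> i = level_label d a k
      \<or> level_diff d mod m = (a - b) mod m \<and> i = level_label d b k"
    using decode[OF assms(2-4)] by blast
  obtain d' where d': "d' \<in> level_kinds" "level_diff d' mod m = (b - a) mod m \<and> i' = level_label d' a k
      \<or> level_diff d' mod m = (a - b) mod m \<and> i' = level_label d' b k"
    using decode[OF assms(5-7)] by blast
  have opposite: False
    if "level_diff e mod m = (b - a) mod m" "level_diff e' mod m = (a - b) mod m"
      "e \<in> level_kinds" "e' \<in> level_kinds" for e e'
  proof -
    have "(level_diff e + level_diff e') mod m = ((b - a) + (a - b)) mod m"
      using that(1,2) by (rule mod_add_cong)
    with level_diff_sum_mod_nonzero[OF that(3,4)] show False by simp
  qed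
  from d(2) d'(2) show ?thesis
    using level_diff_inj[OF d(1) d'(1)] opposite[OF _ _ d(1) d'(1)] opposite[OF _ _ d'(1) d(1)]
    by auto
qed

lemma nested_pair_unique:
  assumes "p \<in> points" "q \<in> points" "p \<noteq> q"
    and i: "i \<in> labels" "z \<in> block i" "{nest i, z} = {p, q}"
    and i': "i' \<in> labels" "z' \<in> block i'" "{nest i', z'} = {p, q}"
  shows "i = i'"
  using assms(1-3)
proof (cases rule: points_pair_cases)
  case (Infty a k)
  with i i' show ?thesis by (intro nested_Infty_pair_unique) simp_all
next
  case (level a b k)
  with i i' show ?thesis by (intro nested_level_pair_unique) simp_all
next
  case (succ a b k)
  with i i' show ?thesis by (intro nested_cross_pair_unique) simp_all
qed

lemma nest_notin_block: "i \<in> labels \<Longrightarrow> nest i \<notin> block i"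
proof (cases i)
  case (Col x)
  moreover assume "i \<in> labels"
  moreover have "(x + (t + 2)) mod m \<noteq> x mod m"
    using t_ge by (simp only: add_mod_eq_self_iff) simp
  ultimately show ?thesis
    by (auto simp: pt_eq_iff)
next
  case (Dev x h j)
  show ?thesis
  proof (cases "h \<in> inner_diffs")
    case h: True
    have "Dev_level h \<in> level_kinds"
      using h by (simp add: level_kinds_def)
    from level_diff_range[OF this] have "(offset h - h) mod m \<noteq> 0"
      using t_ge by (simp add: mod_pos_pos_trivial)
    have "(x + offset h) mod m \<noteq> (x + h) mod m"
    proof
      assume "(x + offset h) mod m = (x + h) mod m"
      from mod_diff_cong[OF this refl, of "x + h"] \<open>(offset h - h) mod m \<noteq> 0\<close> show False
        by simp
    qed
    with Dev h show ?thesis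
      by (auto simp: pt_eq_iff)
  qed (use Dev in simp)
qed (auto simp: pt_eq_iff)

lemma card_augmented_block: "i \<in> labels \<Longrightarrow> card (insert (nest i) (block i)) = 4"
  using card_block nest_notin_block card_ge_0_finite[of "block i"] by simp

lemma augmented_pair_count_points:
  assumes p: "p \<in> points" and q: "q \<in> points" and pq: "p \<noteq> q"
  shows "pair_count labels (\<lambda>i. insert (nest i) (block i)) p q \<le> 3"
proof -
  let ?B = "{i \<in> labels. p \<in> block i \<and> q \<in> block i}"
  let ?N = "{i \<in> labels. \<exists>z \<in> block i. {nest i, z} = {p, q}}"
  have "{i \<in> labels. p \<in> insert (nest i) (block i) \<and> q \<in> insert (nest i) (block i)} \<subseteq> ?B \<union> ?N"
    using pq by (auto simp: insert_commute)
  then have "pair_count labels (\<lambda>i. insert (nest i) (block i)) p q \<le> card (?B \<union> ?N)"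
    unfolding pair_count_def by (intro card_mono) (simp_all add: finite_labels)
  also have "\<dots> \<le> card ?B + card ?N"
    by (rule card_Un_le)
  also have "card ?B = 2"
    using pair_count_points[OF p q pq] by (simp add: pair_count_def)
  also have "card ?N \<le> 1"
    using nested_pair_unique[OF p q pq] finite_labels
    by (auto simp: card_le_Suc0_iff_eq)
  finally show ?thesis by simp
qed

lemma Dev_labels_through_pt:
  "{Dev x h j |x j. pt a k \<in> block (Dev x h j) \<and> 0 \<le> x \<and> x < m \<and> 0 \<le> j \<and> j < 3}
     \<subseteq> {Dev (a mod m) h (k mod 3), Dev ((a - 2 * h) mod m) h (k mod 3), Dev ((a - h) mod m) h ((k - 1) mod 3)}"
  by (auto simp: pt_in_block_iff mod_eq_solve eq_commute[of "k mod 3"] eq_commute[of "a mod m"]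
      simp del: block.simps)

lemma augmented_pair_count_Aux:
  assumes q: "q \<in> ext_points" "q \<noteq> Aux h"
  shows "pair_count labels (\<lambda>i. insert (nest i) (block i)) (Aux h) q \<le> 3"
proof -
  let ?S = "{i \<in> labels. Aux h \<in> insert (nest i) (block i) \<and> q \<in> insert (nest i) (block i)}"
  have S: "?S \<subseteq> {Dev x h j |x j. q \<in> block (Dev x h j) \<and> 0 \<le> x \<and> x < m \<and> 0 \<le> j \<and> j < 3}"
  proof
    fix i assume i: "i \<in> ?S"
    moreover have "Aux h \<notin> block i"
      using block_subset_points[of i] by auto
    ultimately have "nest i = Aux h"
      by auto
    with i q show "i \<in> {Dev x h j |x j. q \<in> block (Dev x h j) \<and> 0 \<le> x \<and> x < m \<and> 0 \<le> j \<and> j < 3}"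
      by (cases i) (auto split: if_splits)
  qed
  have "card ?S \<le> 3"
  proof (cases "\<exists>a k. q = pt a k")
    case True
    then obtain a k where q_eq: "q = pt a k" by blast
    from S Dev_labels_through_pt[where a = a and k = k and h = h] have "?S \<subseteq> {Dev (a mod m) h (k mod 3), Dev ((a - 2 * h) mod m) h (k mod 3), Dev ((a - h) mod m) h ((k - 1) mod 3)}"
      unfolding q_eq by (rule subset_trans)
    then have "card ?S \<le> card {Dev (a mod m) h (k mod 3), Dev ((a - 2 * h) mod m) h (k mod 3),
        Dev ((a - h) mod m) h ((k - 1) mod 3)}"
      by (rule card_mono[rotated]) simp
    also have "\<dots> \<le> 3"
      by (simp add: card_insert_if)
    finally show ?thesis .
  next
    case False
    with q have "q \<in> points \<Longrightarrow> q = Infty"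
      by (auto elim: points_cases)
    with S q have "?S = {}"
      by (auto simp: ext_points_def)
    then show ?thesis
      by (metis card.empty zero_le)
  qed
  then show ?thesis by (simp add: pair_count_def)
qed

lemma augmented_pair_count:
  assumes p: "p \<in> ext_points" and q: "q \<in> ext_points" and pq: "p \<noteq> q"
  shows "pair_count labels (\<lambda>i. insert (nest i) (block i)) p q \<le> 3"
proof (cases "p \<in> points \<and> q \<in> points")
  case True
  with pq show ?thesis by (simp add: augmented_pair_count_points)
next
  case False
  with p q consider h where "p = Aux h" | h where "q = Aux h"
    by (auto simp: ext_points_def)
  then show ?thesis
  proof cases
    case 1
    with q pq show ?thesis by (simp add: augmented_pair_count_Aux)
  next
    case 2
    with p pq show ?thesis by (simp add: augmented_pair_count_Aux pair_count_commute[of _ _ p])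
  qed
qed

theorem design_weak_nesting: "is_weak_nesting ext_points (card ext_points) labels block 3 2 nest"
  unfolding is_weak_nesting_def is_partial_BIBD_def
  using nest_in_ext_points nest_notin_block card_augmented_block block_subset_ext_points
    augmented_pair_count finite_ext_points finite_labels
  by simp

end

theorem theorem3p6:
  fixes t :: nat
  assumes "t \<ge> 2"
  shows "\<exists>(X :: nat set) (Y :: nat set) (I :: nat set) (B :: nat \<Rightarrow> nat set) (\<phi> :: nat \<Rightarrow> nat).
           is_BIBD X (12 * t + 10) 3 2 I B \<and> X \<subseteq> Y \<and> finite Y \<and> card Y = 14 * t + 13 \<and>
           is_weak_nesting Y (14 * t + 13) I B 3 2 \<phi>"
proof -
  interpret cyclic_nesting "int t"
    using assms by unfold_locales simp
  have "card points = 12 * t + 10" "card ext_points = 14 * t + 13"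
    using card_points card_ext_points by simp_all
  with weak_nesting_on_nat[OF design_is_BIBD points_subset_ext_points finite_ext_points
      design_weak_nesting]
  show ?thesis by simp
qed

end
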